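(* $A_o^*(n)$ is equal to the quotient of $A_o(n)$ by the closed ideal generated by the relations $abc=cba$, one for each choice of $a,b,c\in\{u_{ij}: i,j=1,\dots,n\}$.
   Context: $A_o(n)$ is the universal $C^*$-algebra generated by self-adjoint elements $u_{ij}$ ($1\le i,j\le n$) such that $u=(u_{ij})$ satisfies $uu^t=u^tu=1$. $P(k,l)$ is the set of partitions of a set of $k$ upper points labelled $1,\dots,k$ and $l$ lower points labelled $1,\dots,l$. Two blocks $\{a,b\},\{c,d\}$ of a pairing cross if, listing the points in the cyclic order upper $1,\dots,k$ then lower $l,\dots,1$ (with $a<b$, $c<d$), one has $a<c<b<d$ or $c<a<d<b$. $P_o^*(k,l)$ is the set of pairings in $P(k,l)$ in which each block crosses an even number of other blocks. For $p\in P(k,l)$, $T_p:(\mathbb C^n)^{\otimes k}\to(\mathbb C^n)^{\otimes l}$ is $T_p(e_{i_1}\otimes\dots\otimes e_{i_k})=\sum_j\delta_p(i,j)e_{j_1}\otimes\dots\otimes e_{j_l}$, with $\delta_p(i,j)=1$ if points in the same block carry equal labels (upper point $r$ labelled $i_r$, lower point $s$ labelled $j_s$) and $0$ otherwise. $A_o^*(n)$ is the quotient of $A_o(n)$ by the closed ideal generated by the entries of $(T_p\otimes1)u^{\otimes k}-u^{\otimes l}(T_p\otimes1)$ for all $k,l$ and $p\in P_o^*(k,l)$, where $u^{\otimes k}$ is the $n^k\times n^k$ matrix with entries $u_{i_1j_1}\cdots u_{i_kj_k}$. *)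

theory Defs
  imports "HOL-Analysis.Analysis" "HOL-Library.FuncSet"
begin

text \<open>The real Banach-algebra structure comes from the library; complex scalar
  multiplication and the involution are added here.\<close>

class cstar_algebra = banach + real_normed_algebra_1 +
  fixes scaleC :: "complex \<Rightarrow> 'a \<Rightarrow> 'a"
    and adj :: "'a \<Rightarrow> 'a"
  assumes scaleC_add_right: "scaleC c (x + y) = scaleC c x + scaleC c y"
    and scaleC_add_left: "scaleC (c + d) x = scaleC c x + scaleC d x"
    and scaleC_scaleC: "scaleC c (scaleC d x) = scaleC (c * d) x"
    and scaleC_one: "scaleC 1 x = x"
    and scaleR_scaleC: "scaleR r x = scaleC (complex_of_real r) x"
    and scaleC_mult_left: "scaleC c x * y = scaleC c (x * y)"
    and mult_scaleC_right: "x * scaleC c y = scaleC c (x * y)"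
    and norm_scaleC: "norm (scaleC c x) = cmod c * norm x"
    and adj_adj: "adj (adj x) = x"
    and adj_add: "adj (x + y) = adj x + adj y"
    and adj_mult: "adj (x * y) = adj y * adj x"
    and adj_scaleC: "adj (scaleC c x) = scaleC (cnj c) (adj x)"
    and cstar_identity: "norm (adj x * x) = (norm x)\<^sup>2"

text \<open>Points of P(k,l): upper points Inl r (r < k), lower points Inr s (s < l),
  0-based (upper point r+1 / lower point s+1 of the paper).\<close>

definition pts :: "nat \<Rightarrow> nat \<Rightarrow> (nat + nat) set" where
  "pts k l = Inl ` {..<k} \<union> Inr ` {..<l}"

definition is_pairing :: "nat \<Rightarrow> nat \<Rightarrow> (nat + nat) set set \<Rightarrow> bool" where
  "is_pairing k l p \<longleftrightarrow> \<Union>p = pts k l \<and> (\<forall>B\<in>p. card B = 2)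
     \<and> (\<forall>B\<in>p. \<forall>C\<in>p. B \<noteq> C \<longrightarrow> B \<inter> C = {})"

text \<open>Position in the cyclic order upper 1..k, then lower l..1.\<close>
fun cpos :: "nat \<Rightarrow> nat \<Rightarrow> nat + nat \<Rightarrow> nat" where
  "cpos k l (Inl r) = r"
| "cpos k l (Inr s) = k + (l - 1 - s)"

definition crosses :: "nat \<Rightarrow> nat \<Rightarrow> (nat + nat) set \<Rightarrow> (nat + nat) set \<Rightarrow> bool" where
  "crosses k l B C \<longleftrightarrow> (\<exists>a b c d. B = {a, b} \<and> C = {c, d}
      \<and> cpos k l a < cpos k l b \<and> cpos k l c < cpos k l d
      \<and> ((cpos k l a < cpos k l c \<and> cpos k l c < cpos k l b \<and> cpos k l b < cpos k l d)
         \<or> (cpos k l c < cpos k l a \<and> cpos k l a < cpos k l d \<and> cpos k l d < cpos k l b)))"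

definition Po_star :: "nat \<Rightarrow> nat \<Rightarrow> (nat + nat) set set set" where
  "Po_star k l = {p. is_pairing k l p \<and>
      (\<forall>B\<in>p. even (card {C\<in>p. crosses k l B C}))}"

definition delta :: "(nat + nat) set set \<Rightarrow> (nat \<Rightarrow> nat) \<Rightarrow> (nat \<Rightarrow> nat) \<Rightarrow> bool" where
  "delta p i j \<longleftrightarrow> (\<forall>B\<in>p. \<forall>x\<in>B. \<forall>y\<in>B.
      case_sum i j x = case_sum i j y)"

abbreviation multi_idx :: "nat \<Rightarrow> nat \<Rightarrow> (nat \<Rightarrow> nat) set" where
  "multi_idx k n \<equiv> {..<k} \<rightarrow>\<^sub>E {..<n}"

text \<open>Entry (j, i') of (T_p \<otimes> 1) u^{\<otimes>k} equals entry (j, i') of u^{\<otimes>l} (T_p \<otimes> 1),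
  for all j \<in> [n]^l, i' \<in> [n]^k. Products are ordered (noncommutative).\<close>
definition intertwines ::
  "nat \<Rightarrow> (nat \<Rightarrow> nat \<Rightarrow> 'a::ring_1) \<Rightarrow> nat \<Rightarrow> nat \<Rightarrow> (nat + nat) set set \<Rightarrow> bool" where
  "intertwines n u k l p \<longleftrightarrow>
     (\<forall>j\<in>multi_idx l n. \<forall>i'\<in>multi_idx k n.
        (\<Sum>i\<in>multi_idx k n. if delta p i j then prod_list (map (\<lambda>r. u (i r) (i' r)) [0..<k]) else 0)
      = (\<Sum>j'\<in>multi_idx l n. if delta p i' j' then prod_list (map (\<lambda>s. u (j s) (j' s)) [0..<l]) else 0))"

definition orth_selfadj :: "nat \<Rightarrow> (nat \<Rightarrow> nat \<Rightarrow> 'a::cstar_algebra) \<Rightarrow> bool" where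
  "orth_selfadj n u \<longleftrightarrow>
     (\<forall>i<n. \<forall>j<n. adj (u i j) = u i j)
   \<and> (\<forall>i<n. \<forall>j<n. (\<Sum>m<n. u i m * u j m) = (if i = j then 1 else 0))
   \<and> (\<forall>i<n. \<forall>j<n. (\<Sum>m<n. u m i * u m j) = (if i = j then 1 else 0))"

end

theory Submission
  imports Defs "HOL-Library.Multiset"
begin

text \<open>Under the half-commutation relations abc = cba a product of entries of u depends only on
  the multisets of letters in even and in odd positions. For p in P_o^* the parity condition on
  crossings forces every cap to join points of opposite parity and every through-string to join
  upper and lower points of equal parity. In an entry of (T_p \<otimes> 1) u^{\<otimes>k} each upper cap can
  therefore be moved next to its partner and summed away by orthogonality of u, which leaves a
  word in the entries on the through-strings; the entry of u^{\<otimes>l} (T_p \<otimes> 1) reduces, with the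
  roles of rows and columns exchanged, to a word with the same letters in the same parities.
  Conversely the pairing of P(3,3) made of three mutually crossing strings lies in P_o^*, and its
  intertwining relation is exactly abc = cba.\<close>

section \<open>Words under half-commutation\<close>

definition half_commuting :: "'a::semigroup_mult set \<Rightarrow> bool" where
  "half_commuting G \<longleftrightarrow> (\<forall>a\<in>G. \<forall>b\<in>G. \<forall>c\<in>G. a * b * c = c * b * a)"

fun even_letters :: "'a list \<Rightarrow> 'a multiset" and odd_letters :: "'a list \<Rightarrow> 'a multiset" where
  "even_letters [] = {#}"
| "even_letters (x # xs) = add_mset x (odd_letters xs)"
| "odd_letters [] = {#}"
| "odd_letters (x # xs) = even_letters xs"

lemma letters_append:
  "even_letters (xs @ ys) = even_letters xs + (if even (length xs) then even_letters ys else odd_letters ys)"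
  "odd_letters (xs @ ys) = odd_letters xs + (if even (length xs) then odd_letters ys else even_letters ys)"
  by (induction xs) auto

lemma letters_append_even:
  assumes "even (length xs)"
  shows "even_letters (xs @ ys) = even_letters xs + even_letters ys"
    and "odd_letters (xs @ ys) = odd_letters xs + odd_letters ys"
  using assms by (simp_all add: letters_append)

lemma set_letters: "set_mset (even_letters xs) \<union> set_mset (odd_letters xs) = set xs"
  by (induction xs rule: induct_list012) auto

lemma size_letters:
  "size (even_letters xs) = size (odd_letters xs) \<or> size (even_letters xs) = Suc (size (odd_letters xs))"
  by (induction xs rule: induct_list012) auto

lemma in_letters_split:
  "x \<in># even_letters ys \<Longrightarrow> \<exists>as bs. ys = as @ x # bs \<and> even (length as)"
  "x \<in># odd_letters ys \<Longrightarrow> \<exists>as bs. ys = as @ x # bs \<and> odd (length as)"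
proof (induction ys)
  case (Cons y ys)
  case 1
  then consider "x = y" | "x \<in># odd_letters ys" by auto
  then show ?case
  proof cases
    case 1
    then show ?thesis by (intro exI[of _ "[]"] exI[of _ ys]) simp
  next
    case 2
    then obtain as bs where "ys = as @ x # bs" "odd (length as)" using Cons.IH(2) by blast
    then show ?thesis by (intro exI[of _ "y # as"] exI[of _ bs]) simp
  qed
qed (auto, metis append_Cons length_Cons even_Suc)

fun swap_pairs :: "'a list \<Rightarrow> 'a list" where
  "swap_pairs (a # b # xs) = b # a # swap_pairs xs"
| "swap_pairs xs = xs"

lemma letters_swap_pairs:
  assumes "even (length xs)"
  shows "even_letters (swap_pairs xs) = odd_letters xs" "odd_letters (swap_pairs xs) = even_letters xs"
    "length (swap_pairs xs) = length xs" "set (swap_pairs xs) = set xs"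
  using assms by (induction xs rule: swap_pairs.induct) auto

lemma prod_list_snoc_half_commuting:
  fixes x :: "'a::monoid_mult"
  assumes G: "half_commuting G"
  shows "set xs \<subseteq> G \<Longrightarrow> x \<in> G \<Longrightarrow> even (length xs) \<Longrightarrow>
    prod_list (xs @ [x]) = x * prod_list (swap_pairs xs)"
proof (induction xs rule: swap_pairs.induct)
  case (1 a b xs)
  then have "prod_list ((a # b # xs) @ [x]) = (a * b * x) * prod_list (swap_pairs xs)"
    by (simp add: mult.assoc)
  also have "a * b * x = x * b * a"
    using G 1 by (simp add: half_commuting_def)
  finally show ?case by (simp add: mult.assoc)
qed auto

text \<open>The first letter of one word occurs in the other behind a prefix of even length;
  half-commutation moves it to the front while swapping the letters of the prefix in adjacent
  pairs, which keeps the parity of the position of every letter.\<close>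

theorem prod_list_eq_if_letters_eq:
  fixes xs ys :: "'a::monoid_mult list"
  assumes G: "half_commuting G"
  shows "set xs \<subseteq> G \<Longrightarrow> set ys \<subseteq> G \<Longrightarrow> even_letters xs = even_letters ys \<Longrightarrow>
    odd_letters xs = odd_letters ys \<Longrightarrow> prod_list xs = prod_list ys"
proof (induction xs arbitrary: ys)
  case Nil
  then show ?case by (cases ys) auto
next
  case (Cons x xs ys)
  have "x \<in># even_letters ys" unfolding Cons.prems(3)[symmetric] by simp
  then obtain as bs where ys: "ys = as @ x # bs" and as: "even (length as)"
    by (blast dest: in_letters_split(1))
  note sw = letters_swap_pairs[OF as]
  have G_as: "set as \<subseteq> G" "x \<in> G" using Cons.prems(2) ys by auto
  have "prod_list ys = prod_list (as @ [x]) * prod_list bs" by (simp add: ys mult.assoc)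
  also have "\<dots> = x * prod_list (swap_pairs as @ bs)"
    using prod_list_snoc_half_commuting[OF G G_as as] by (simp add: mult.assoc)
  finally have prod_ys: "prod_list ys = x * prod_list (swap_pairs as @ bs)" .
  have even_sw: "even (length (swap_pairs as))" using as sw by simp
  have "prod_list xs = prod_list (swap_pairs as @ bs)"
  proof (rule Cons.IH)
    show "set xs \<subseteq> G" "set (swap_pairs as @ bs) \<subseteq> G" using Cons.prems ys sw by auto
    show "even_letters xs = even_letters (swap_pairs as @ bs)"
      using Cons.prems(4) sw letters_append_even[OF as] letters_append_even[OF even_sw] ys by simp
    show "odd_letters xs = odd_letters (swap_pairs as @ bs)"
      using Cons.prems(3) sw letters_append_even[OF as] letters_append_even[OF even_sw] ys by simp
  qed
  then show ?case using prod_ys by simp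
qed

fun interleave :: "'a list \<Rightarrow> 'a list \<Rightarrow> 'a list" where
  "interleave (x # xs) (y # ys) = x # y # interleave xs ys"
| "interleave [] ys = ys"
| "interleave xs [] = xs"

lemma letters_interleave:
  "length xs = length ys \<or> length xs = Suc (length ys) \<Longrightarrow>
    even_letters (interleave xs ys) = mset xs \<and> odd_letters (interleave xs ys) = mset ys"
  by (induction xs ys rule: interleave.induct) auto

lemma ex_list_with_letters:
  assumes "size A = size B \<or> size A = Suc (size B)"
  shows "\<exists>xs. even_letters xs = A \<and> odd_letters xs = B"
proof -
  obtain xs ys where "mset xs = A" "mset ys = B" by (metis ex_mset)
  then show ?thesis using letters_interleave[of xs ys] assms by (metis size_mset)
qed

lemma letters_map_upt:
  "even_letters (map f [0..<k]) = image_mset f (mset_set {r. r < k \<and> even r})"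
  "odd_letters (map f [0..<k]) = image_mset f (mset_set {r. r < k \<and> odd r})"
proof (induction k)
  case (Suc k)
  have "{r. r < Suc k \<and> even r} = (if even k then insert k {r. r < k \<and> even r} else {r. r < k \<and> even r})"
    "{r. r < Suc k \<and> odd r} = (if odd k then insert k {r. r < k \<and> odd r} else {r. r < k \<and> odd r})"
    by (auto simp: less_Suc_eq)
  then show "even_letters (map f [0..<Suc k]) = image_mset f (mset_set {r. r < Suc k \<and> even r})"
    "odd_letters (map f [0..<Suc k]) = image_mset f (mset_set {r. r < Suc k \<and> odd r})"
    using Suc letters_append[of "map f [0..<k]" "[f k]"] by simp_all
qed simp_all

lemma letters_concat_pairs:
  "even_letters (concat (map (\<lambda>c. [f c, g c]) cs)) = mset (map f cs)"
  "odd_letters (concat (map (\<lambda>c. [f c, g c]) cs)) = mset (map g cs)"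
  "length (concat (map (\<lambda>c. [f c, g c]) cs)) = 2 * length cs"
  by (induction cs) auto

text \<open>Contraction of caps: each adjacent pair sharing a summation index is removed by
  orthogonality of the columns of u.\<close>

lemma sum_concat_pairs_orthogonal:
  fixes u :: "nat \<Rightarrow> nat \<Rightarrow> 'a::semiring_1"
  assumes orth: "\<forall>a<n. \<forall>b<n. (\<Sum>m<n. u m a * u m b) = (if a = b then 1 else 0)"
  shows "distinct cs \<Longrightarrow> (\<forall>c\<in>set cs. f c < n \<and> g c < n) \<Longrightarrow>
    (\<Sum>x\<in>set cs \<rightarrow>\<^sub>E {..<n}. prod_list (concat (map (\<lambda>c. [u (x c) (f c), u (x c) (g c)]) cs)) * w)
      = (if \<forall>c\<in>set cs. f c = g c then w else 0)"
proof (induction cs)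
  case (Cons c cs)
  let ?F = "\<lambda>x cs. prod_list (concat (map (\<lambda>c. [u (x c) (f c), u (x c) (g c)]) cs)) * w"
  have c: "c \<notin> set cs" using Cons.prems by simp
  have F_upd: "?F (x(c := y)) (c # cs) = u y (f c) * u y (g c) * ?F x cs" for x y
  proof -
    have "?F (x(c := y)) cs = ?F x cs"
      using c by (intro arg_cong[where f="\<lambda>xs. prod_list (concat xs) * w"] map_cong) auto
    then show ?thesis by (simp add: mult.assoc fun_upd_same del: fun_upd_apply)
  qed
  have "(\<Sum>x\<in>set (c # cs) \<rightarrow>\<^sub>E {..<n}. ?F x (c # cs))
      = (\<Sum>(y, x)\<in>{..<n} \<times> (set cs \<rightarrow>\<^sub>E {..<n}). ?F (x(c := y)) (c # cs))"
    unfolding set_simps PiE_insert_eq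
    by (subst sum.reindex[OF inj_combinator[OF c]]) (simp add: case_prod_unfold)
  also have "\<dots> = (\<Sum>(y, x)\<in>{..<n} \<times> (set cs \<rightarrow>\<^sub>E {..<n}). u y (f c) * u y (g c) * ?F x cs)"
    by (simp only: F_upd)
  also have "\<dots> = (\<Sum>y<n. u y (f c) * u y (g c)) * (\<Sum>x\<in>set cs \<rightarrow>\<^sub>E {..<n}. ?F x cs)"
    by (simp only: sum_product sum.cartesian_product)
  also have "\<dots> = (if f c = g c then 1 else 0) * (if \<forall>c\<in>set cs. f c = g c then w else 0)"
  proof -
    have "(\<Sum>y<n. u y (f c) * u y (g c)) = (if f c = g c then 1 else 0)"
      using orth Cons.prems(2) by simp
    moreover have "(\<Sum>x\<in>set cs \<rightarrow>\<^sub>E {..<n}. ?F x cs) = (if \<forall>c\<in>set cs. f c = g c then w else 0)"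
      using Cons.IH Cons.prems by simp
    ultimately show ?thesis by (simp only:)
  qed
  also have "\<dots> = (if \<forall>c\<in>set (c # cs). f c = g c then w else 0)"
    by simp
  finally show ?case .
qed simp

lemma finite_pts: "finite (pts k l)"
  by (simp add: pts_def)

lemma delta_block: "delta p i j \<Longrightarrow> {a, b} \<in> p \<Longrightarrow> case_sum i j a = case_sum i j b"
  unfolding delta_def by fast

locale pairing =
  fixes k l :: nat and p :: "(nat + nat) set set"
  assumes is_pairing: "is_pairing k l p"
begin

lemma Union_blocks: "\<Union>p = pts k l"
  using is_pairing by (simp add: is_pairing_def)

lemma card_block: "B \<in> p \<Longrightarrow> card B = 2"
  using is_pairing by (simp add: is_pairing_def)

lemma disjoint_blocks: "B \<in> p \<Longrightarrow> C \<in> p \<Longrightarrow> B \<noteq> C \<Longrightarrow> B \<inter> C = {}"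
  using is_pairing by (simp add: is_pairing_def)

lemma block_unique: "B \<in> p \<Longrightarrow> C \<in> p \<Longrightarrow> x \<in> B \<Longrightarrow> x \<in> C \<Longrightarrow> B = C"
  using disjoint_blocks by blast

lemma block_subset_pts: "B \<in> p \<Longrightarrow> B \<subseteq> pts k l"
  using Union_blocks by blast

lemma finite_blocks: "finite p"
proof (rule finite_subset)
  show "p \<subseteq> Pow (pts k l)" using block_subset_pts by blast
  show "finite (Pow (pts k l))" by (simp add: finite_pts)
qed

lemma block_doubleton: "B \<in> p \<Longrightarrow> \<exists>a b. a \<noteq> b \<and> B = {a, b}"
  using card_block by (meson card_2_iff)

lemma block_distinct: "{x, y} \<in> p \<Longrightarrow> x \<noteq> y"
  using card_block by fastforce

lemma block_pts: "{x, y} \<in> p \<Longrightarrow> x \<in> pts k l \<and> y \<in> pts k l"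
  using block_subset_pts by blast

lemma block_bounds:
  "{Inl r, z} \<in> p \<Longrightarrow> r < k" "{z, Inl r} \<in> p \<Longrightarrow> r < k"
  "{Inr s, z} \<in> p \<Longrightarrow> s < l" "{z, Inr s} \<in> p \<Longrightarrow> s < l"
  by (auto dest!: block_pts simp: pts_def)

definition mate :: "nat + nat \<Rightarrow> nat + nat" where
  "mate x = (THE y. {x, y} \<in> p)"

lemma mate_eq: "{x, y} \<in> p \<Longrightarrow> mate x = y"
  unfolding mate_def
proof (rule the_equality)
  fix y' assume xy: "{x, y} \<in> p" and xy': "{x, y'} \<in> p"
  then have "{x, y'} = {x, y}" using block_unique by blast
  then show "y' = y" using block_distinct[OF xy'] by (metis doubleton_eq_iff)
qed

lemma block_mate: "x \<in> pts k l \<Longrightarrow> {x, mate x} \<in> p"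
proof -
  assume "x \<in> pts k l"
  then obtain B where B: "B \<in> p" "x \<in> B" using Union_blocks by blast
  then obtain y where "{x, y} \<in> p" using block_doubleton by (metis insertE insert_commute singletonD)
  then show ?thesis using mate_eq by metis
qed

lemma mate_Inl_cases:
  assumes "r < k"
  obtains r' where "mate (Inl r) = Inl r'" "{Inl r, Inl r'} \<in> p"
    | s where "mate (Inl r) = Inr s" "{Inl r, Inr s} \<in> p"
  using block_mate[of "Inl r"] assms by (cases "mate (Inl r)") (auto simp: pts_def)

lemma delta_if_blocks: "(\<And>a b. {a, b} \<in> p \<Longrightarrow> case_sum i j a = case_sum i j b) \<Longrightarrow> delta p i j"
  unfolding delta_def by (metis block_doubleton insert_iff singletonD)

text \<open>An upper cap is recorded as a pair whose first component is its even end (this is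
  meaningful once caps join points of opposite parity); through-strings are split by the parity
  of their upper end.\<close>

definition upper_caps :: "(nat \<times> nat) set" where
  "upper_caps = {(r, r'). {Inl r, Inl r'} \<in> p \<and> even r}"

definition through_even :: "(nat \<times> nat) set" where
  "through_even = {(r, s). {Inl r, Inr s} \<in> p \<and> even r}"

definition through_odd :: "(nat \<times> nat) set" where
  "through_odd = {(r, s). {Inl r, Inr s} \<in> p \<and> odd r}"

lemma upper_caps_subset: "upper_caps \<subseteq> {..<k} \<times> {..<k}"
  unfolding upper_caps_def by (auto dest: block_bounds)

lemma through_subset: "through_even \<subseteq> {..<k} \<times> {..<l}" "through_odd \<subseteq> {..<k} \<times> {..<l}"
  unfolding through_even_def through_odd_def by (auto dest: block_bounds)

lemma finite_caps_throughs: "finite upper_caps" "finite through_even" "finite through_odd"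
  using upper_caps_subset through_subset finite_subset by blast+

end

definition entries :: "nat \<Rightarrow> (nat \<Rightarrow> nat \<Rightarrow> 'a) \<Rightarrow> 'a set" where
  "entries n u = {u i j |i j. i < n \<and> j < n}"

lemma entriesI: "a < n \<Longrightarrow> b < n \<Longrightarrow> u a b \<in> entries n u"
  unfolding entries_def by blast

lemma image_mset_mset_set_Un_images:
  assumes "finite A" "finite B" "inj_on f A" "inj_on g B" "f ` A \<inter> g ` B = {}"
  shows "image_mset h (mset_set (f ` A \<union> g ` B))
    = image_mset (h \<circ> f) (mset_set A) + image_mset (h \<circ> g) (mset_set B)"
  using assms by (simp add: mset_set_Union image_mset_mset_set[symmetric] multiset.map_comp)

locale alternating_pairing = pairing +
  assumes upper_cap_parity: "{Inl r, Inl r'} \<in> p \<Longrightarrow> even r \<longleftrightarrow> odd r'"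
begin

lemma upper_cap_rev: "(r, r') \<in> upper_caps \<Longrightarrow> {Inl r', Inl r} \<in> p \<and> odd r'"
  unfolding upper_caps_def using upper_cap_parity by (auto simp: insert_commute)

lemma upper_caps_cover: "{Inl r, Inl r'} \<in> p \<Longrightarrow> (r, r') \<in> upper_caps \<or> (r', r) \<in> upper_caps"
  using upper_cap_parity by (auto simp: upper_caps_def insert_commute)

lemma even_upper_points:
  "{r. r < k \<and> even r} = fst ` upper_caps \<union> fst ` through_even"
  "fst ` upper_caps \<inter> fst ` through_even = {}" "inj_on fst upper_caps" "inj_on fst through_even"
proof -
  show "{r. r < k \<and> even r} = fst ` upper_caps \<union> fst ` through_even"
  proof (intro equalityI subsetI)
    fix r assume "r \<in> {r. r < k \<and> even r}"
    then have "r < k" "even r" by auto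
    then show "r \<in> fst ` upper_caps \<union> fst ` through_even"
      by (cases rule: mate_Inl_cases) (force simp: upper_caps_def through_even_def)+
  qed (use upper_caps_subset through_subset in \<open>auto simp: upper_caps_def through_even_def\<close>)
  show "fst ` upper_caps \<inter> fst ` through_even = {}"
    by (force simp: upper_caps_def through_even_def dest: mate_eq)
  show "inj_on fst upper_caps" "inj_on fst through_even"
    by (force simp: inj_on_def upper_caps_def through_even_def dest: mate_eq)+
qed

lemma odd_upper_points:
  "{r. r < k \<and> odd r} = snd ` upper_caps \<union> fst ` through_odd"
  "snd ` upper_caps \<inter> fst ` through_odd = {}" "inj_on snd upper_caps" "inj_on fst through_odd"
proof -
  show "{r. r < k \<and> odd r} = snd ` upper_caps \<union> fst ` through_odd"
  proof (intro equalityI subsetI)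
    fix r assume "r \<in> {r. r < k \<and> odd r}"
    then have r: "r < k" "odd r" by auto
    then show "r \<in> snd ` upper_caps \<union> fst ` through_odd"
    proof (cases rule: mate_Inl_cases)
      case (1 r')
      then have "(r', r) \<in> upper_caps"
        using upper_cap_parity r by (auto simp: upper_caps_def insert_commute)
      then show ?thesis by force
    qed (force simp: through_odd_def)
  qed (use upper_caps_subset in \<open>auto simp: through_odd_def dest: block_bounds upper_cap_rev\<close>)
  show "snd ` upper_caps \<inter> fst ` through_odd = {}"
    by (force simp: upper_caps_def through_odd_def insert_commute dest: mate_eq)
  show "inj_on snd upper_caps" "inj_on fst through_odd"
    by (force simp: inj_on_def upper_caps_def through_odd_def insert_commute dest: mate_eq)+
qed

lemma letters_upper_word:
  assumes through: "\<And>r s. {Inl r, Inr s} \<in> p \<Longrightarrow> i r = j s"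
  shows "even_letters (map (\<lambda>r. u (i r) (i' r)) [0..<k]) =
      image_mset (\<lambda>c. u (i (fst c)) (i' (fst c))) (mset_set upper_caps)
    + image_mset (\<lambda>(r, s). u (j s) (i' r)) (mset_set through_even)"
    and "odd_letters (map (\<lambda>r. u (i r) (i' r)) [0..<k]) =
      image_mset (\<lambda>c. u (i (snd c)) (i' (snd c))) (mset_set upper_caps)
    + image_mset (\<lambda>(r, s). u (j s) (i' r)) (mset_set through_odd)"
proof -
  let ?f = "\<lambda>r. u (i r) (i' r)"
  have through_letters: "image_mset (?f \<circ> fst) (mset_set T) = image_mset (\<lambda>(r, s). u (j s) (i' r)) (mset_set T)"
    if "T \<subseteq> through_even \<union> through_odd" for T
  proof (rule image_mset_cong)
    fix c assume "c \<in># mset_set T"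
    then have "c \<in> through_even \<union> through_odd"
      using that by (metis elem_mset_set empty_iff mset_set.infinite set_mset_empty subsetD)
    then show "(?f \<circ> fst) c = (\<lambda>(r, s). u (j s) (i' r)) c"
      using through by (auto simp: through_even_def through_odd_def)
  qed
  show "even_letters (map ?f [0..<k]) =
      image_mset (\<lambda>c. u (i (fst c)) (i' (fst c))) (mset_set upper_caps)
    + image_mset (\<lambda>(r, s). u (j s) (i' r)) (mset_set through_even)"
    unfolding letters_map_upt even_upper_points(1)
    by (simp add: image_mset_mset_set_Un_images finite_caps_throughs even_upper_points(2-4)
        through_letters[symmetric] comp_def)
  show "odd_letters (map ?f [0..<k]) =
      image_mset (\<lambda>c. u (i (snd c)) (i' (snd c))) (mset_set upper_caps)
    + image_mset (\<lambda>(r, s). u (j s) (i' r)) (mset_set through_odd)"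
    unfolding letters_map_upt odd_upper_points(1)
    by (simp add: image_mset_mset_set_Un_images finite_caps_throughs odd_upper_points(2-4)
        through_letters[symmetric] comp_def)
qed

definition label_upper :: "(nat \<Rightarrow> nat) \<Rightarrow> (nat \<times> nat \<Rightarrow> nat) \<Rightarrow> nat \<Rightarrow> nat" where
  "label_upper j x r = (if r < k then
     (case mate (Inl r) of Inl r' \<Rightarrow> if even r then x (r, r') else x (r', r) | Inr s \<Rightarrow> j s)
   else undefined)"

lemma label_upper_through: "{Inl r, Inr s} \<in> p \<Longrightarrow> label_upper j x r = j s"
  by (auto simp: label_upper_def mate_eq dest: block_bounds)

lemma label_upper_cap:
  assumes "c \<in> upper_caps"
  shows "label_upper j x (fst c) = x c" "label_upper j x (snd c) = x c"
  using assms upper_cap_rev[of "fst c" "snd c"] upper_caps_subset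
  by (auto simp: label_upper_def upper_caps_def mate_eq)

lemma label_upper_cases:
  assumes "r < k"
  obtains c where "c \<in> upper_caps" "r = fst c \<or> r = snd c" "label_upper j x r = x c"
    | s where "{Inl r, Inr s} \<in> p" "label_upper j x r = j s"
  using assms
proof (cases rule: mate_Inl_cases)
  case (1 r')
  then show ?thesis using upper_caps_cover that(1) label_upper_cap by (metis fst_conv snd_conv)
qed (use that(2) label_upper_through in blast)

lemma label_upper_in_multi_idx:
  assumes "j \<in> multi_idx l n" "x \<in> upper_caps \<rightarrow>\<^sub>E {..<n}"
  shows "label_upper j x \<in> multi_idx k n"
proof (rule PiE_I)
  fix r assume "r \<in> {..<k}"
  then have "r < k" by simp
  then show "label_upper j x r \<in> {..<n}"
    by (cases rule: label_upper_cases[of r j x]) (use assms block_bounds(4) in \<open>auto simp: PiE_iff\<close>)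
qed (simp add: label_upper_def)

lemma delta_label_upper:
  assumes "\<And>s t. {Inr s, Inr t} \<in> p \<Longrightarrow> j s = j t"
  shows "delta p (label_upper j x) j"
proof (rule delta_if_blocks)
  fix a b assume ab: "{a, b} \<in> p"
  show "case_sum (label_upper j x) j a = case_sum (label_upper j x) j b"
  proof (cases a; cases b)
    fix r r' assume "a = Inl r" "b = Inl r'"
    then have "(r, r') \<in> upper_caps \<or> (r', r) \<in> upper_caps"
      using ab upper_caps_cover by simp
    then show ?thesis using \<open>a = Inl r\<close> \<open>b = Inl r'\<close> label_upper_cap by (metis fst_conv snd_conv sum.case(1))
  qed (use ab assms label_upper_through in \<open>auto simp: insert_commute\<close>)
qed

text \<open>Labelling the upper caps freely is the same as choosing an upper multi-index compatible
  with p and the lower multi-index j.\<close>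

lemma bij_betw_label_upper:
  assumes j: "j \<in> multi_idx l n" and lower: "\<And>s t. {Inr s, Inr t} \<in> p \<Longrightarrow> j s = j t"
  shows "bij_betw (label_upper j) (upper_caps \<rightarrow>\<^sub>E {..<n}) {i \<in> multi_idx k n. delta p i j}"
proof (rule bij_betwI[where g = "\<lambda>i. restrict (\<lambda>c. i (fst c)) upper_caps"])
  show "label_upper j \<in> (upper_caps \<rightarrow>\<^sub>E {..<n}) \<rightarrow> {i \<in> multi_idx k n. delta p i j}"
    using label_upper_in_multi_idx[OF j] delta_label_upper[OF lower] by (simp add: Pi_iff)
  show "(\<lambda>i. restrict (\<lambda>c. i (fst c)) upper_caps) \<in> {i \<in> multi_idx k n. delta p i j} \<rightarrow> upper_caps \<rightarrow>\<^sub>E {..<n}"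
  proof
    fix i assume "i \<in> {i \<in> multi_idx k n. delta p i j}"
    then have "i \<in> multi_idx k n" by simp
    moreover have "fst c \<in> {..<k}" if "c \<in> upper_caps" for c
      using that upper_caps_subset by auto
    ultimately show "restrict (\<lambda>c. i (fst c)) upper_caps \<in> upper_caps \<rightarrow>\<^sub>E {..<n}"
      unfolding restrict_PiE_iff by (blast intro: PiE_mem)
  qed
  show "restrict (\<lambda>c. label_upper j x (fst c)) upper_caps = x" if "x \<in> upper_caps \<rightarrow>\<^sub>E {..<n}" for x
  proof
    fix c show "restrict (\<lambda>c. label_upper j x (fst c)) upper_caps c = x c"
      using PiE_arb[OF that] by (cases "c \<in> upper_caps") (simp_all add: label_upper_cap(1))
  qed
next
  fix i assume "i \<in> {i \<in> multi_idx k n. delta p i j}"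
  then have i: "i \<in> multi_idx k n" and delta: "delta p i j" by auto
  show "label_upper j (restrict (\<lambda>c. i (fst c)) upper_caps) = i"
  proof
    fix r show "label_upper j (restrict (\<lambda>c. i (fst c)) upper_caps) r = i r"
    proof (cases "r < k")
      case True
      then show ?thesis
      proof (cases rule: label_upper_cases[of r j "restrict (\<lambda>c. i (fst c)) upper_caps"])
        case (1 c)
        then have "i (fst c) = i (snd c)"
          using delta_block[OF delta] by (force simp: upper_caps_def)
        then show ?thesis using 1 by auto
      next
        case (2 s)
        then show ?thesis using delta_block[OF delta] by fastforce
      qed
    qed (use i in \<open>auto simp: label_upper_def PiE_iff extensional_def\<close>)
  qed
qed

lemma prod_upper_word_label:
  fixes u :: "nat \<Rightarrow> nat \<Rightarrow> 'a::monoid_mult"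
  assumes G: "half_commuting (entries n u)"
    and cs: "distinct cs" "set cs = upper_caps"
    and x: "x \<in> upper_caps \<rightarrow>\<^sub>E {..<n}" and i': "i' \<in> multi_idx k n" and j: "j \<in> multi_idx l n"
    and T: "set T \<subseteq> entries n u"
      "even_letters T = image_mset (\<lambda>(r, s). u (j s) (i' r)) (mset_set through_even)"
      "odd_letters T = image_mset (\<lambda>(r, s). u (j s) (i' r)) (mset_set through_odd)"
  shows "prod_list (map (\<lambda>r. u (label_upper j x r) (i' r)) [0..<k])
    = prod_list (concat (map (\<lambda>c. [u (x c) (i' (fst c)), u (x c) (i' (snd c))]) cs)) * prod_list T"
proof -
  let ?caps = "concat (map (\<lambda>c. [u (x c) (i' (fst c)), u (x c) (i' (snd c))]) cs)"
  let ?word = "map (\<lambda>r. u (label_upper j x r) (i' r)) [0..<k]"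
  have cap_letters:
    "image_mset (\<lambda>c. u (label_upper j x (fst c)) (i' (fst c))) (mset_set upper_caps) = mset (map (\<lambda>c. u (x c) (i' (fst c))) cs)"
    "image_mset (\<lambda>c. u (label_upper j x (snd c)) (i' (snd c))) (mset_set upper_caps) = mset (map (\<lambda>c. u (x c) (i' (snd c))) cs)"
    unfolding cs(2)[symmetric] mset_set_set[OF cs(1)] mset_map
    using label_upper_cap cs(2) by (auto intro: image_mset_cong)
  have entries_caps: "set ?caps \<subseteq> entries n u"
  proof -
    have "x c < n" "i' (fst c) < n" "i' (snd c) < n" if "c \<in> upper_caps" for c
      using that x i' upper_caps_subset by (auto simp: PiE_iff)
    then show ?thesis using cs(2) by (auto intro: entriesI)
  qed
  have entries_word: "set ?word \<subseteq> entries n u"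
    using label_upper_in_multi_idx[OF j x] i' by (auto simp: PiE_iff intro!: entriesI)
  have even_caps: "even (length ?caps)" by (simp add: letters_concat_pairs)
  note word_letters = letters_upper_word[of "label_upper j x" j u i', OF label_upper_through]
  have "prod_list ?word = prod_list (?caps @ T)"
  proof (rule prod_list_eq_if_letters_eq[OF G entries_word])
    show "set (?caps @ T) \<subseteq> entries n u" using entries_caps T(1) by simp
    show "even_letters ?word = even_letters (?caps @ T)"
      by (simp add: word_letters cap_letters T letters_append_even[OF even_caps] letters_concat_pairs)
    show "odd_letters ?word = odd_letters (?caps @ T)"
      by (simp add: word_letters cap_letters T letters_append_even[OF even_caps] letters_concat_pairs)
  qed
  then show ?thesis by simp
qed

lemma ball_upper_caps_iff:
  "(\<forall>c\<in>upper_caps. f (fst c) = f (snd c)) \<longleftrightarrow> (\<forall>r r'. {Inl r, Inl r'} \<in> p \<longrightarrow> f r = f r')"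
proof
  assume caps: "\<forall>c\<in>upper_caps. f (fst c) = f (snd c)"
  show "\<forall>r r'. {Inl r, Inl r'} \<in> p \<longrightarrow> f r = f r'"
  proof (intro allI impI)
    fix r r' assume "{Inl r, Inl r'} \<in> p"
    then have "(r, r') \<in> upper_caps \<or> (r', r) \<in> upper_caps" by (rule upper_caps_cover)
    then show "f r = f r'" using caps by force
  qed
qed (auto simp: upper_caps_def)

lemma sum_upper_word:
  fixes u :: "nat \<Rightarrow> nat \<Rightarrow> 'a::semiring_1"
  assumes G: "half_commuting (entries n u)"
    and col: "\<forall>a<n. \<forall>b<n. (\<Sum>m<n. u m a * u m b) = (if a = b then 1 else 0)"
    and i': "i' \<in> multi_idx k n" and j: "j \<in> multi_idx l n"
    and T: "set T \<subseteq> entries n u"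
      "even_letters T = image_mset (\<lambda>(r, s). u (j s) (i' r)) (mset_set through_even)"
      "odd_letters T = image_mset (\<lambda>(r, s). u (j s) (i' r)) (mset_set through_odd)"
  shows "(\<Sum>i\<in>multi_idx k n. if delta p i j then prod_list (map (\<lambda>r. u (i r) (i' r)) [0..<k]) else 0)
    = (if (\<forall>s t. {Inr s, Inr t} \<in> p \<longrightarrow> j s = j t) \<and> (\<forall>r r'. {Inl r, Inl r'} \<in> p \<longrightarrow> i' r = i' r')
       then prod_list T else 0)"
proof (cases "\<forall>s t. {Inr s, Inr t} \<in> p \<longrightarrow> j s = j t")
  case False
  then have "\<not> delta p i j" for i using delta_block[of p i j "Inr _" "Inr _"] by auto
  then show ?thesis using False by auto
next
  case lower: True
  obtain cs where cs: "distinct cs" "set cs = upper_caps"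
    using finite_distinct_list[OF finite_caps_throughs(1)] by blast
  have bounded: "\<forall>c\<in>set cs. i' (fst c) < n \<and> i' (snd c) < n"
  proof
    fix c assume "c \<in> set cs"
    then have "fst c \<in> {..<k}" "snd c \<in> {..<k}" using cs(2) upper_caps_subset by auto
    then show "i' (fst c) < n \<and> i' (snd c) < n" using PiE_mem[OF i'] by auto
  qed
  have "(\<Sum>i\<in>multi_idx k n. if delta p i j then prod_list (map (\<lambda>r. u (i r) (i' r)) [0..<k]) else 0)
      = (\<Sum>i\<in>{i \<in> multi_idx k n. delta p i j}. prod_list (map (\<lambda>r. u (i r) (i' r)) [0..<k]))"
    by (simp add: sum.inter_filter finite_PiE)
  also have "\<dots> = (\<Sum>x\<in>upper_caps \<rightarrow>\<^sub>E {..<n}. prod_list (map (\<lambda>r. u (label_upper j x r) (i' r)) [0..<k]))"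
    using sum.reindex_bij_betw[OF bij_betw_label_upper[OF j],
        where g = "\<lambda>i. prod_list (map (\<lambda>r. u (i r) (i' r)) [0..<k])"] lower by simp
  also have "\<dots> = (\<Sum>x\<in>set cs \<rightarrow>\<^sub>E {..<n}.
      prod_list (concat (map (\<lambda>c. [u (x c) (i' (fst c)), u (x c) (i' (snd c))]) cs)) * prod_list T)"
    using prod_upper_word_label[OF G cs _ i' j T] cs(2) by (intro sum.cong) auto
  also have "\<dots> = (if \<forall>c\<in>upper_caps. i' (fst c) = i' (snd c) then prod_list T else 0)"
    using sum_concat_pairs_orthogonal[OF col cs(1) bounded] unfolding cs(2) .
  finally show ?thesis using lower by (simp add: ball_upper_caps_iff)
qed

lemma ex_through_word:
  assumes j: "j \<in> multi_idx l n" and i': "i' \<in> multi_idx k n"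
  obtains T where "set T \<subseteq> entries n u"
    "even_letters T = image_mset (\<lambda>(r, s). u (j s) (i' r)) (mset_set through_even)"
    "odd_letters T = image_mset (\<lambda>(r, s). u (j s) (i' r)) (mset_set through_odd)"
proof -
  let ?A = "image_mset (\<lambda>(r, s). u (j s) (i' r)) (mset_set through_even)"
  let ?B = "image_mset (\<lambda>(r, s). u (j s) (i' r)) (mset_set through_odd)"
  have "size ?A = size ?B \<or> size ?A = Suc (size ?B)"
    using size_letters[of "map (\<lambda>r. u (label_upper j (\<lambda>_. 0) r) (i' r)) [0..<k]"]
      letters_upper_word[of "label_upper j (\<lambda>_. 0)" j u i', OF label_upper_through]
    by simp
  then obtain T where T: "even_letters T = ?A" "odd_letters T = ?B"
    using ex_list_with_letters by blast
  have "(\<lambda>(r, s). u (j s) (i' r)) c \<in> entries n u" if "c \<in> through_even \<union> through_odd" for c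
  proof (cases c)
    case (Pair r s)
    then have "r \<in> {..<k}" "s \<in> {..<l}" using that through_subset by auto
    then show ?thesis using Pair PiE_mem[OF j] PiE_mem[OF i'] by (simp add: entriesI)
  qed
  moreover have "set T = (\<lambda>(r, s). u (j s) (i' r)) ` through_even \<union> (\<lambda>(r, s). u (j s) (i' r)) ` through_odd"
    using set_letters[of T] T finite_caps_throughs by simp
  ultimately have "set T \<subseteq> entries n u" by (simp add: image_subset_iff)
  with T that show ?thesis by blast
qed

end

section \<open>Crossings and parity\<close>

lemma cpos_less: "z \<in> pts k l \<Longrightarrow> cpos k l z < k + l"
  by (auto simp: pts_def)

lemma inj_on_cpos: "inj_on (cpos k l) (pts k l)"
  by (auto simp: pts_def inj_on_def)

lemma cpos_image_pts: "cpos k l ` pts k l = {..<k + l}"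
proof (intro equalityI subsetI)
  fix m assume m: "m \<in> {..<k + l}"
  show "m \<in> cpos k l ` pts k l"
  proof (cases "m < k")
    case True
    then show ?thesis by (intro image_eqI[of _ _ "Inl m"]) (auto simp: pts_def)
  next
    case False
    then show ?thesis using m by (intro image_eqI[of _ _ "Inr (k + l - 1 - m)"]) (auto simp: pts_def)
  qed
next
  fix m assume "m \<in> cpos k l ` pts k l"
  then show "m \<in> {..<k + l}" using cpos_less by blast
qed

lemma card_cpos_between:
  assumes "b \<in> pts k l"
  shows "card {z \<in> pts k l. cpos k l a < cpos k l z \<and> cpos k l z < cpos k l b} = cpos k l b - cpos k l a - 1"
proof -
  let ?M = "{z \<in> pts k l. cpos k l a < cpos k l z \<and> cpos k l z < cpos k l b}"
  have image: "cpos k l ` ?M = {cpos k l a<..<cpos k l b}"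
  proof (intro equalityI subsetI)
    fix m assume m: "m \<in> {cpos k l a<..<cpos k l b}"
    then have "m \<in> cpos k l ` pts k l" using cpos_less[OF assms] cpos_image_pts by auto
    then obtain z where "z \<in> pts k l" "m = cpos k l z" by blast
    then show "m \<in> cpos k l ` ?M" using m by auto
  qed auto
  have "inj_on (cpos k l) ?M" using inj_on_cpos by (rule inj_on_subset) blast
  then have "card ?M = card (cpos k l ` ?M)" by (simp add: card_image)
  then show ?thesis using image by simp
qed

lemma crosses_iff_separates:
  assumes pts: "a \<in> pts k l" "b \<in> pts k l" "c \<in> pts k l" "d \<in> pts k l"
    and ab: "cpos k l a < cpos k l b" and cd: "c \<noteq> d" and disjoint: "{c, d} \<inter> {a, b} = {}"
  shows "crosses k l {a, b} {c, d} \<longleftrightarrow>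
    (cpos k l a < cpos k l c \<and> cpos k l c < cpos k l b) \<noteq> (cpos k l a < cpos k l d \<and> cpos k l d < cpos k l b)"
proof -
  let ?c = "cpos k l"
  have distinct: "?c c \<noteq> ?c d" "?c c \<noteq> ?c a" "?c c \<noteq> ?c b" "?c d \<noteq> ?c a" "?c d \<noteq> ?c b"
    using inj_onD[OF inj_on_cpos] pts cd disjoint by blast+
  show ?thesis
  proof
    assume "crosses k l {a, b} {c, d}"
    then obtain a' b' c' d' where h: "{a, b} = {a', b'}" "{c, d} = {c', d'}"
      "?c a' < ?c b'" "?c c' < ?c d'"
      "(?c a' < ?c c' \<and> ?c c' < ?c b' \<and> ?c b' < ?c d') \<or> (?c c' < ?c a' \<and> ?c a' < ?c d' \<and> ?c d' < ?c b')"
      unfolding crosses_def by blast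
    have "a' = a \<and> b' = b" using h(1,3) ab unfolding doubleton_eq_iff by auto
    moreover have "(c' = c \<and> d' = d) \<or> (c' = d \<and> d' = c)" using h(2) unfolding doubleton_eq_iff by auto
    ultimately show "(?c a < ?c c \<and> ?c c < ?c b) \<noteq> (?c a < ?c d \<and> ?c d < ?c b)"
      using h(3-5) by auto
  next
    assume separates: "(?c a < ?c c \<and> ?c c < ?c b) \<noteq> (?c a < ?c d \<and> ?c d < ?c b)"
    show "crosses k l {a, b} {c, d}"
    proof (cases "?c c < ?c d")
      case True
      then show ?thesis unfolding crosses_def
        using separates distinct ab by (intro exI[of _ a] exI[of _ b] exI[of _ c] exI[of _ d]) auto
    next
      case False
      then show ?thesis unfolding crosses_def
        using separates distinct ab by (intro exI[of _ a] exI[of _ b] exI[of _ d] exI[of _ c]) auto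
    qed
  qed
qed

lemma not_crosses_self: "cpos k l a < cpos k l b \<Longrightarrow> \<not> crosses k l {a, b} {a, b}"
  unfolding crosses_def doubleton_eq_iff by auto

lemma odd_card_Int_doubleton: "c \<noteq> d \<Longrightarrow> odd (card ({c, d} \<inter> M)) \<longleftrightarrow> (c \<in> M) \<noteq> (d \<in> M)"
  by (cases "c \<in> M"; cases "d \<in> M") auto

context pairing
begin

text \<open>A block crosses exactly those blocks having one point strictly between its two ends, so the
  number of crossings has the parity of the number of points between them.\<close>

lemma even_crossings_iff_even_between:
  assumes B: "{a, b} \<in> p" and ab: "cpos k l a < cpos k l b"
  shows "even (card {C \<in> p. crosses k l {a, b} C}) \<longleftrightarrow> even (cpos k l b - cpos k l a - 1)"
proof -
  define M where "M = {z \<in> pts k l. cpos k l a < cpos k l z \<and> cpos k l z < cpos k l b}"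
  have ab_pts: "a \<in> pts k l" "b \<in> pts k l" using block_pts[OF B] by auto
  have "card M = (\<Sum>C\<in>p. card (C \<inter> M))"
  proof -
    have "M = (\<Union>C\<in>p. C \<inter> M)" using Union_blocks unfolding M_def by blast
    moreover have "card (\<Union>C\<in>p. C \<inter> M) = (\<Sum>C\<in>p. card (C \<inter> M))"
    proof (rule card_UN_disjoint[OF finite_blocks])
      show "\<forall>C\<in>p. finite (C \<inter> M)" unfolding M_def using finite_pts by auto
      show "\<forall>C\<in>p. \<forall>D\<in>p. C \<noteq> D \<longrightarrow> C \<inter> M \<inter> (D \<inter> M) = {}"
        using disjoint_blocks by blast
    qed
    ultimately show ?thesis by simp
  qed
  then have "even (card M) \<longleftrightarrow> even (card {C \<in> p. odd (card (C \<inter> M))})"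
    using even_sum_iff[OF finite_blocks] by simp
  moreover have "{C \<in> p. odd (card (C \<inter> M))} = {C \<in> p. crosses k l {a, b} C}"
  proof (rule Collect_cong, rule conj_cong[OF refl])
    fix C assume C: "C \<in> p"
    obtain c d where cd: "c \<noteq> d" "C = {c, d}" using block_doubleton[OF C] by blast
    have cd_pts: "c \<in> pts k l" "d \<in> pts k l" using block_pts C cd by blast+
    show "odd (card (C \<inter> M)) \<longleftrightarrow> crosses k l {a, b} C"
    proof (cases "C = {a, b}")
      case True
      then have "C \<inter> M = {}" unfolding M_def using ab by auto
      then show ?thesis using not_crosses_self[OF ab] True by simp
    next
      case False
      then have disjoint: "{c, d} \<inter> {a, b} = {}" using disjoint_blocks[OF C B] cd by simp
      show ?thesis
        unfolding cd(2) odd_card_Int_doubleton[OF cd(1)]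
          crosses_iff_separates[OF ab_pts cd_pts ab cd(1) disjoint]
        using cd_pts unfolding M_def by simp
    qed
  qed
  ultimately show ?thesis using card_cpos_between[OF ab_pts(2)] unfolding M_def by simp
qed

lemma even_crossings_iff:
  assumes B: "{a, b} \<in> p"
  shows "even (card {C \<in> p. crosses k l {a, b} C}) \<longleftrightarrow> odd (cpos k l a + cpos k l b)"
proof -
  have "cpos k l a \<noteq> cpos k l b"
    using inj_onD[OF inj_on_cpos] block_pts[OF B] block_distinct[OF B] by blast
  then consider "cpos k l a < cpos k l b" | "cpos k l b < cpos k l a" by linarith
  then show ?thesis
  proof cases
    case 1
    then show ?thesis using even_crossings_iff_even_between[OF B] by presburger
  next
    case 2
    then show ?thesis using even_crossings_iff_even_between[of b a] B by (simp add: insert_commute)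
  qed
qed

lemma even_card_pts: "even (k + l)"
proof -
  have "k + l = card (pts k l)"
    unfolding pts_def by (subst card_Un_disjoint) (auto simp: card_image)
  also have "\<dots> = (\<Sum>B\<in>p. card B)"
    unfolding Union_blocks[symmetric] using disjoint_blocks finite_subset[OF block_subset_pts finite_pts]
    by (intro card_Union_disjoint) (auto simp: pairwise_def disjnt_def)
  also have "\<dots> = 2 * card p" using card_block by simp
  finally show ?thesis by simp
qed

end

lemma Po_star_pairing: "p \<in> Po_star k l \<Longrightarrow> pairing k l p"
  by (simp add: Po_star_def pairing_def)

lemma Po_star_block_parity: "p \<in> Po_star k l \<Longrightarrow> {a, b} \<in> p \<Longrightarrow> odd (cpos k l a + cpos k l b)"
  using pairing.even_crossings_iff[OF Po_star_pairing] by (auto simp: Po_star_def)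

lemma Po_star_upper_cap_parity: "p \<in> Po_star k l \<Longrightarrow> {Inl r, Inl r'} \<in> p \<Longrightarrow> even r \<longleftrightarrow> odd r'"
  using Po_star_block_parity by fastforce

lemma Po_star_lower_cap_parity:
  assumes "p \<in> Po_star k l" "{Inr s, Inr t} \<in> p"
  shows "even s \<longleftrightarrow> odd t"
proof -
  define x where "x = k + (l - 1 - s) + (k + (l - 1 - t))"
  have "s < l" "t < l" using pairing.block_bounds[OF Po_star_pairing[OF assms(1)]] assms(2) by blast+
  then have "x + s + t + 2 = 2 * (k + l)" unfolding x_def by simp
  moreover have "odd x" using Po_star_block_parity[OF assms] unfolding x_def by simp
  ultimately show ?thesis by presburger
qed

lemma Po_star_through_parity:
  assumes "p \<in> Po_star k l" "{Inl r, Inr s} \<in> p"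
  shows "even r \<longleftrightarrow> even s"
proof -
  define x where "x = r + (k + (l - 1 - s))"
  have "s < l" using pairing.block_bounds[OF Po_star_pairing[OF assms(1)]] assms(2) by blast
  then have "x + s + 1 = r + (k + l)" unfolding x_def by simp
  moreover have "odd x" using Po_star_block_parity[OF assms] unfolding x_def by simp
  moreover have "even (k + l)" using pairing.even_card_pts[OF Po_star_pairing[OF assms(1)]] .
  ultimately show ?thesis by presburger
qed

lemma Po_star_alternating: "p \<in> Po_star k l \<Longrightarrow> alternating_pairing k l p"
  using Po_star_pairing Po_star_upper_cap_parity by (simp add: alternating_pairing_def alternating_pairing_axioms_def)

section \<open>Exchanging upper and lower points\<close>

definition swap_side :: "nat + nat \<Rightarrow> nat + nat" where
  "swap_side = case_sum Inr Inl"

definition flip_pairing :: "(nat + nat) set set \<Rightarrow> (nat + nat) set set" where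
  "flip_pairing p = image swap_side ` p"

lemma swap_side_simps [simp]: "swap_side (Inl r) = Inr r" "swap_side (Inr s) = Inl s"
  by (simp_all add: swap_side_def)

lemma swap_side_swap_side [simp]: "swap_side (swap_side x) = x"
  by (cases x) simp_all

lemma inj_swap_side: "inj swap_side"
  by (rule inj_on_inverseI[where g = swap_side]) simp

lemma image_swap_side_image [simp]: "swap_side ` swap_side ` B = B"
  by (simp add: image_comp)

lemma mem_flip_pairing: "B \<in> flip_pairing p \<longleftrightarrow> swap_side ` B \<in> p"
  unfolding flip_pairing_def
proof
  assume "B \<in> image swap_side ` p"
  then show "swap_side ` B \<in> p" by auto
next
  assume "swap_side ` B \<in> p"
  then show "B \<in> image swap_side ` p" by (rule rev_image_eqI) simp
qed

lemma flip_pairing_block: "{x, y} \<in> flip_pairing p \<longleftrightarrow> {swap_side x, swap_side y} \<in> p"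
  by (simp add: mem_flip_pairing)

lemma pairing_flip:
  assumes "pairing k l p"
  shows "pairing l k (flip_pairing p)"
proof -
  interpret pairing k l p by fact
  have "\<Union>(flip_pairing p) = swap_side ` pts k l"
    unfolding flip_pairing_def Union_blocks[symmetric] by (simp add: image_Union)
  also have "\<dots> = pts l k"
    unfolding pts_def image_Un image_image by (simp add: Un_commute)
  finally have "\<Union>(flip_pairing p) = pts l k" .
  moreover have "card B = 2" if "B \<in> flip_pairing p" for B
    using that card_block[of "swap_side ` B"] card_image[OF inj_on_subset[OF inj_swap_side]]
    by (simp add: mem_flip_pairing)
  moreover have "B \<inter> C = {}" if "B \<in> flip_pairing p" "C \<in> flip_pairing p" "B \<noteq> C" for B C
  proof -
    have "swap_side ` B \<inter> swap_side ` C = {}"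
      using that disjoint_blocks inj_image_eq_iff[OF inj_swap_side] by (simp add: mem_flip_pairing)
    then show ?thesis by (simp add: image_Int[OF inj_swap_side, symmetric])
  qed
  ultimately show ?thesis by (simp add: pairing_def is_pairing_def)
qed

lemma delta_flip_pairing: "delta (flip_pairing p) j i \<longleftrightarrow> delta p i j"
proof -
  have "case_sum j i (swap_side x) = case_sum i j x" for x by (cases x) simp_all
  then show ?thesis unfolding delta_def flip_pairing_def by simp
qed

lemma Po_star_flip_alternating: "p \<in> Po_star k l \<Longrightarrow> alternating_pairing l k (flip_pairing p)"
  using pairing_flip[OF Po_star_pairing] Po_star_lower_cap_parity
  by (simp add: alternating_pairing_def alternating_pairing_axioms_def flip_pairing_block)

lemma Po_star_through_flip:
  assumes p: "p \<in> Po_star k l"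
  shows "pairing.through_even (flip_pairing p) = prod.swap ` pairing.through_even p"
    and "pairing.through_odd (flip_pairing p) = prod.swap ` pairing.through_odd p"
proof -
  interpret P: pairing k l p using Po_star_pairing[OF p] .
  interpret Q: pairing l k "flip_pairing p" using pairing_flip[OF Po_star_pairing[OF p]] .
  have "{Inl s, Inr r} \<in> flip_pairing p \<longleftrightarrow> {Inl r, Inr s} \<in> p" for r s
    by (simp add: flip_pairing_block insert_commute)
  then show "Q.through_even = prod.swap ` P.through_even" "Q.through_odd = prod.swap ` P.through_odd"
    using Po_star_through_parity[OF p]
    by (auto simp: P.through_even_def Q.through_even_def P.through_odd_def Q.through_odd_def image_iff)
qed

theorem intertwines_if_half_commuting:
  fixes u :: "nat \<Rightarrow> nat \<Rightarrow> 'a::ring_1"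
  assumes G: "half_commuting (entries n u)"
    and col: "\<forall>a<n. \<forall>b<n. (\<Sum>m<n. u m a * u m b) = (if a = b then 1 else 0)"
    and row: "\<forall>a<n. \<forall>b<n. (\<Sum>m<n. u a m * u b m) = (if a = b then 1 else 0)"
    and p: "p \<in> Po_star k l"
  shows "intertwines n u k l p"
  unfolding intertwines_def
proof (intro ballI)
  fix j i' assume j: "j \<in> multi_idx l n" and i': "i' \<in> multi_idx k n"
  interpret P: alternating_pairing k l p using Po_star_alternating[OF p] .
  interpret Q: alternating_pairing l k "flip_pairing p" using Po_star_flip_alternating[OF p] .
  define v where "v a b = u b a" for a b
  have entries_v: "entries n v = entries n u" unfolding entries_def v_def by blast
  have col_v: "\<forall>a<n. \<forall>b<n. (\<Sum>m<n. v m a * v m b) = (if a = b then 1 else 0)"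
    using row unfolding v_def by simp
  obtain T where T: "set T \<subseteq> entries n u"
    "even_letters T = image_mset (\<lambda>(r, s). u (j s) (i' r)) (mset_set P.through_even)"
    "odd_letters T = image_mset (\<lambda>(r, s). u (j s) (i' r)) (mset_set P.through_odd)"
    using P.ex_through_word[OF j i'] .
  have swap_letters: "image_mset (\<lambda>(r, s). v (i' s) (j r)) (mset_set (prod.swap ` A))
      = image_mset (\<lambda>(r, s). u (j s) (i' r)) (mset_set A)" for A
    by (simp add: image_mset_mset_set[OF inj_swap, symmetric] multiset.map_comp comp_def
        case_prod_unfold v_def)
  have T_flip: "even_letters T = image_mset (\<lambda>(r, s). v (i' s) (j r)) (mset_set Q.through_even)"
    "odd_letters T = image_mset (\<lambda>(r, s). v (i' s) (j r)) (mset_set Q.through_odd)"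
    using T(2,3) by (simp_all add: Po_star_through_flip[OF p] swap_letters)
  have conditions:
    "((\<forall>s t. {Inr s, Inr t} \<in> flip_pairing p \<longrightarrow> i' s = i' t) \<and> (\<forall>r r'. {Inl r, Inl r'} \<in> flip_pairing p \<longrightarrow> j r = j r'))
     \<longleftrightarrow> ((\<forall>s t. {Inr s, Inr t} \<in> p \<longrightarrow> j s = j t) \<and> (\<forall>r r'. {Inl r, Inl r'} \<in> p \<longrightarrow> i' r = i' r'))"
    by (auto simp: flip_pairing_block)
  have "(\<Sum>i\<in>multi_idx k n. if delta p i j then prod_list (map (\<lambda>r. u (i r) (i' r)) [0..<k]) else 0)
      = (if (\<forall>s t. {Inr s, Inr t} \<in> p \<longrightarrow> j s = j t) \<and> (\<forall>r r'. {Inl r, Inl r'} \<in> p \<longrightarrow> i' r = i' r')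
         then prod_list T else 0)"
    by (rule P.sum_upper_word[OF G col i' j T])
  also have "\<dots> = (\<Sum>j'\<in>multi_idx l n. if delta (flip_pairing p) j' i'
      then prod_list (map (\<lambda>s. v (j' s) (j s)) [0..<l]) else 0)"
    unfolding conditions[symmetric]
    by (rule Q.sum_upper_word[OF _ col_v j i' _ T_flip, symmetric]) (use G T(1) entries_v in simp_all)
  also have "\<dots> = (\<Sum>j'\<in>multi_idx l n. if delta p i' j' then prod_list (map (\<lambda>s. u (j s) (j' s)) [0..<l]) else 0)"
    unfolding delta_flip_pairing v_def ..
  finally show "(\<Sum>i\<in>multi_idx k n. if delta p i j then prod_list (map (\<lambda>r. u (i r) (i' r)) [0..<k]) else 0)
      = (\<Sum>j'\<in>multi_idx l n. if delta p i' j' then prod_list (map (\<lambda>s. u (j s) (j' s)) [0..<l]) else 0)" .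
qed

definition reversal_pairing :: "(nat + nat) set set" where
  "reversal_pairing = {{Inl 0, Inr 2}, {Inl 1, Inr 1}, {Inl 2, Inr 0}}"

lemma reversal_pairing_Po_star: "reversal_pairing \<in> Po_star 3 3"
proof -
  have "pts 3 3 = {Inl 0, Inl 1, Inl 2, Inr 0, Inr 1, Inr 2}"
    by (auto simp: pts_def numeral_3_eq_3 less_Suc_eq)
  then have pairing: "pairing 3 3 reversal_pairing"
    by (auto simp: pairing_def is_pairing_def reversal_pairing_def)
  have crossings: "even (card {C \<in> reversal_pairing. crosses 3 3 {a, b} C})"
    if "{a, b} \<in> reversal_pairing" "odd (cpos 3 3 a + cpos 3 3 b)" for a b
    using pairing.even_crossings_iff[OF pairing that(1)] that(2) by simp
  have "even (card {C \<in> reversal_pairing. crosses 3 3 B C})" if "B \<in> reversal_pairing" for B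
  proof -
    from that consider "B = {Inl 0, Inr 2}" | "B = {Inl 1, Inr 1}" | "B = {Inl 2, Inr 0}"
      unfolding reversal_pairing_def by blast
    then show ?thesis by cases (use that in \<open>simp_all add: crossings\<close>)
  qed
  then show ?thesis using pairing by (simp add: Po_star_def pairing_def)
qed

lemma multi_idx_3_eqI:
  assumes "x \<in> multi_idx 3 n" "y \<in> multi_idx 3 n" "x 0 = y 0" "x 1 = y 1" "x 2 = y 2"
  shows "x = y"
proof (rule PiE_ext[OF assms(1,2)])
  fix i :: nat assume "i \<in> {..<3}"
  then have "i = 0 \<or> i = 1 \<or> i = 2" by auto
  then show "x i = y i" using assms(3-5) by auto
qed

lemma sum_multi_idx_3_single:
  assumes x0: "x0 \<in> multi_idx 3 n" and P: "\<And>x. P x \<longleftrightarrow> x 0 = x0 0 \<and> x 1 = x0 1 \<and> x 2 = x0 2"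
  shows "(\<Sum>x\<in>multi_idx 3 n. if P x then f x else 0) = f x0"
proof -
  have "P x \<longleftrightarrow> x = x0" if "x \<in> multi_idx 3 n" for x
    using multi_idx_3_eqI[OF that x0] P by auto
  then show ?thesis using x0 by (simp add: sum.delta finite_PiE cong: sum.cong)
qed

lemma intertwines_reversal_imp_entries_half_commute:
  fixes u :: "nat \<Rightarrow> nat \<Rightarrow> 'a::ring_1"
  assumes I: "intertwines n u 3 3 reversal_pairing"
    and idx: "ia < n" "ja < n" "ib < n" "jb < n" "ic < n" "jc < n"
  shows "u ia ja * u ib jb * u ic jc = u ic jc * u ib jb * u ia ja"
proof -
  define idx3 where "idx3 a b c = restrict (\<lambda>r. [a, b, c] ! r) {..<3}" for a b c :: nat
  have idx3_simps: "idx3 a b c 0 = a" "idx3 a b c 1 = b" "idx3 a b c (Suc 0) = b"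
    "idx3 a b c 2 = c" "idx3 a b c (Suc (Suc 0)) = c" for a b c
    by (simp_all add: idx3_def)
  have idx3_mem: "idx3 a b c \<in> multi_idx 3 n" if "a < n" "b < n" "c < n" for a b c
    using that by (auto simp: idx3_def numeral_3_eq_3 less_Suc_eq)
  have delta_iff: "delta reversal_pairing x y \<longleftrightarrow> x 0 = y 2 \<and> x 1 = y 1 \<and> x 2 = y 0" for x y
    unfolding delta_def reversal_pairing_def by auto
  have "(\<Sum>x\<in>multi_idx 3 n. if delta reversal_pairing x (idx3 ic ib ia)
          then prod_list (map (\<lambda>r. u (x r) (idx3 ja jb jc r)) [0..<3]) else 0)
      = (\<Sum>y\<in>multi_idx 3 n. if delta reversal_pairing (idx3 ja jb jc) y
          then prod_list (map (\<lambda>s. u (idx3 ic ib ia s) (y s)) [0..<3]) else 0)"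
    using I idx3_mem[of ic ib ia] idx3_mem[of ja jb jc] idx unfolding intertwines_def by blast
  moreover have "(\<Sum>x\<in>multi_idx 3 n. if delta reversal_pairing x (idx3 ic ib ia)
          then prod_list (map (\<lambda>r. u (x r) (idx3 ja jb jc r)) [0..<3]) else 0)
      = prod_list (map (\<lambda>r. u (idx3 ia ib ic r) (idx3 ja jb jc r)) [0..<3])"
    by (rule sum_multi_idx_3_single[OF idx3_mem[of ia ib ic]]) (use idx in \<open>auto simp: delta_iff idx3_simps\<close>)
  moreover have "(\<Sum>y\<in>multi_idx 3 n. if delta reversal_pairing (idx3 ja jb jc) y
          then prod_list (map (\<lambda>s. u (idx3 ic ib ia s) (y s)) [0..<3]) else 0)
      = prod_list (map (\<lambda>s. u (idx3 ic ib ia s) (idx3 jc jb ja s)) [0..<3])"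
    by (rule sum_multi_idx_3_single[OF idx3_mem[of jc jb ja]]) (use idx in \<open>auto simp: delta_iff idx3_simps\<close>)
  ultimately have "prod_list (map (\<lambda>r. u (idx3 ia ib ic r) (idx3 ja jb jc r)) [0..<3])
      = prod_list (map (\<lambda>s. u (idx3 ic ib ia s) (idx3 jc jb ja s)) [0..<3])"
    by simp
  then show ?thesis by (simp add: upt_rec idx3_simps mult.assoc)
qed

lemma half_commuting_if_intertwines_reversal:
  fixes u :: "nat \<Rightarrow> nat \<Rightarrow> 'a::ring_1"
  assumes "intertwines n u 3 3 reversal_pairing"
  shows "half_commuting (entries n u)"
  unfolding half_commuting_def entries_def
  using intertwines_reversal_imp_entries_half_commute[OF assms] by blast

theorem theorem6p9:
  fixes n :: nat and u :: "nat \<Rightarrow> nat \<Rightarrow> 'a::cstar_algebra"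
  assumes "orth_selfadj n u"
  shows "(\<forall>k l p. p \<in> Po_star k l \<longrightarrow> intertwines n u k l p) \<longleftrightarrow>
         (\<forall>a\<in>{u i j |i j. i < n \<and> j < n}. \<forall>b\<in>{u i j |i j. i < n \<and> j < n}.
            \<forall>c\<in>{u i j |i j. i < n \<and> j < n}. a * b * c = c * b * a)"
proof -
  have col: "\<forall>a<n. \<forall>b<n. (\<Sum>m<n. u m a * u m b) = (if a = b then 1 else 0)"
    and row: "\<forall>a<n. \<forall>b<n. (\<Sum>m<n. u a m * u b m) = (if a = b then 1 else 0)"
    using assms unfolding orth_selfadj_def by auto
  have "(\<forall>k l p. p \<in> Po_star k l \<longrightarrow> intertwines n u k l p) \<longleftrightarrow> half_commuting (entries n u)"
    using intertwines_if_half_commuting[OF _ col row] half_commuting_if_intertwines_reversal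
      reversal_pairing_Po_star by blast
  then show ?thesis unfolding half_commuting_def entries_def .
qed

end
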